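(* (a) The Baire space $\mathcal{N}$ has a $\pi$-tree $\mathbf{F}$ such that $\mathrm{cofin}\,\omega\gg\mathrm{Rise}_{\mathbf{F}}(\mathcal{N})$. (b) The Sorgenfrey line $\mathcal{R}_{\mathcal{S}}$ has a $\pi$-tree $\mathbf{G}$ such that $\mathrm{cofin}\,\omega\gg\mathrm{Rise}_{\mathbf{G}}(\mathcal{R}_{\mathcal{S}})$. (c) If $X\subseteq\mathcal{R}_{\mathcal{S}}$ and $\mathcal{R}_{\mathcal{S}}\setminus X$ is at most countable, then the subspace $X$ has a $\pi$-tree $\mathbf{H}$ such that $\mathrm{cofin}\{2n+1:n\in\omega\}\gg\mathrm{Rise}_{\mathbf{H}}(X)$.
   Context: $\mathcal{N}$ is ${}^{\omega}\omega$ with the product topology ($\omega$ discrete); $\mathcal{R}_{\mathcal{S}}$ is the real line with the topology generated by half-open intervals $[a,b)$. For a set $B$, $\mathrm{cofin}\,B=\{B\setminus F: F\subseteq B\text{ finite}\}$. Neighbourhoods are not necessarily open. $\omega=\{0,1,2,\dots\}$, ${}^{<\omega}\omega$ is the set of finite sequences of natural numbers. A tree is a strict partial order in which the set of predecessors of every node is well-ordered; $\mathrm{height}(x)$ is the ordinal isomorphic to the set of predecessors of $x$; a branch is a maximal chain; $\mathrm{sons}(x)$ is the set of immediate successors of $x$; $0$ denotes the least node. A foliage tree is a pair $\mathbf{F}=(T,l)$ with $T$ a tree (skeleton) and $l$ a function on its nodes, $\mathbf{F}_x:=l(x)$; tree notions apply via the skeleton. $\mathrm{shoot}_{\mathbf{F}}(v)=\{\bigcup_{x\in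 C}\mathbf{F}_x: C\text{ a cofinite subset of }\mathrm{sons}_{\mathbf{F}}(v)\}$; $\mathrm{scope}_{\mathbf{F}}(p)=\{x:p\in\mathbf{F}_x\}$. For families $\gamma,\delta$ of sets, $\gamma\gg\delta$ means every nonempty $D\in\delta$ contains some nonempty $G\in\gamma$. $\mathrm{rise}_{\mathbf{F}}(p,U)=\{\mathrm{height}_{\mathbf{F}}(v): v\in\mathrm{scope}_{\mathbf{F}}(p),\ \mathrm{shoot}_{\mathbf{F}}(v)\gg\{U\}\}$; $\mathrm{Rise}_{\mathbf{F}}(X)=\{\mathrm{rise}_{\mathbf{F}}(p,U):p\in X,\ U\text{ a neighbourhood of }p\text{ in }X\}$. $\mathbf{F}$ is locally strict if each non-maximal leaf $\mathbf{F}_x$ is the disjoint union of $\mathbf{F}_s$, $s\in\mathrm{sons}(x)$; has strict branches if it has a node and for each branch $B$, $\bigcap_{x\in B}\mathbf{F}_x$ is a singleton; is open in $X$ if all leaves are open in $X$; is a foliage $\omega,\omega$-tree if its skeleton is order-isomorphic to $({}^{<\omega}\omega,\subsetneq)$. A Baire foliage tree on $X$ is an open in $X$, locally strict foliage $\omega,\omega$-tree with strict branches and $\mathbf{F}_{0_{\mathbf{F}}}=X$. $\mathbf{F}$ grows into $X$ if for every $p\in X$ and neighbourhood $U$ of $p$ there is $z\in\mathrm{scope}_{\mathbf{F}}(p)$ with $\mathrm{shoot}_{\mathbf{F}}(z)\gg\{U\}$. A $\pi$-tree on $X$ is a Baire foliage tree on $X$ that grows into $X$. *)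

theory Defs
  imports "HOL-Analysis.Analysis"
begin

text \<open>Foliage omega,omega-trees are represented with skeleton (nat list, proper prefix order),
  i.e. the tree of finite sequences of naturals; the leaf function is F.\<close>

definition cofin :: "'b set \<Rightarrow> 'b set set" where
  "cofin B = {B - E | E. E \<subseteq> B \<and> finite E}"

definition sons :: "nat list \<Rightarrow> nat list set" where
  "sons s = {s @ [n] | n. True}"

definition shoot :: "(nat list \<Rightarrow> 'a set) \<Rightarrow> nat list \<Rightarrow> 'a set set" where
  "shoot F v = {\<Union>x\<in>C. F x | C. C \<in> cofin (sons v)}"

definition scope :: "(nat list \<Rightarrow> 'a set) \<Rightarrow> 'a \<Rightarrow> nat list set" where
  "scope F p = {x. p \<in> F x}"

definition refines :: "'b set set \<Rightarrow> 'b set set \<Rightarrow> bool" (infix "\<ggreater>" 50) where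
  "\<gamma> \<ggreater> \<delta> \<longleftrightarrow> (\<forall>D\<in>\<delta>. D \<noteq> {} \<longrightarrow> (\<exists>G\<in>\<gamma>. G \<noteq> {} \<and> G \<subseteq> D))"

definition nbhd :: "'a topology \<Rightarrow> 'a \<Rightarrow> 'a set \<Rightarrow> bool" where
  "nbhd T p U \<longleftrightarrow> U \<subseteq> topspace T \<and> (\<exists>V. openin T V \<and> p \<in> V \<and> V \<subseteq> U)"

text \<open>height of a node s in the skeleton is length s.\<close>
definition rise :: "(nat list \<Rightarrow> 'a set) \<Rightarrow> 'a \<Rightarrow> 'a set \<Rightarrow> nat set" where
  "rise F p U = {length v | v. v \<in> scope F p \<and> shoot F v \<ggreater> {U}}"

definition Rise :: "(nat list \<Rightarrow> 'a set) \<Rightarrow> 'a topology \<Rightarrow> nat set set" where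
  "Rise F T = {rise F p U | p U. p \<in> topspace T \<and> nbhd T p U}"

definition locally_strict :: "(nat list \<Rightarrow> 'a set) \<Rightarrow> bool" where
  "locally_strict F \<longleftrightarrow> (\<forall>x. F x = (\<Union>s\<in>sons x. F s) \<and> disjoint_family_on F (sons x))"

text \<open>Branches of the skeleton are exactly the sets {take k of f | k}, f :: nat => nat.\<close>
definition strict_branches :: "(nat list \<Rightarrow> 'a set) \<Rightarrow> bool" where
  "strict_branches F \<longleftrightarrow> (\<forall>f::nat \<Rightarrow> nat. \<exists>q. (\<Inter>k. F (map f [0..<k])) = {q})"

definition open_in_space :: "'a topology \<Rightarrow> (nat list \<Rightarrow> 'a set) \<Rightarrow> bool" where
  "open_in_space T F \<longleftrightarrow> (\<forall>x. openin T (F x))"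

definition baire_foliage_tree :: "'a topology \<Rightarrow> (nat list \<Rightarrow> 'a set) \<Rightarrow> bool" where
  "baire_foliage_tree T F \<longleftrightarrow> open_in_space T F \<and> locally_strict F \<and> strict_branches F
     \<and> F [] = topspace T"

definition grows_into :: "'a topology \<Rightarrow> (nat list \<Rightarrow> 'a set) \<Rightarrow> bool" where
  "grows_into T F \<longleftrightarrow> (\<forall>p\<in>topspace T. \<forall>U. nbhd T p U \<longrightarrow>
      (\<exists>z\<in>scope F p. shoot F z \<ggreater> {U}))"

definition pi_tree :: "'a topology \<Rightarrow> (nat list \<Rightarrow> 'a set) \<Rightarrow> bool" where
  "pi_tree T F \<longleftrightarrow> baire_foliage_tree T F \<and> grows_into T F"

definition baire_space_top :: "(nat \<Rightarrow> nat) topology" where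
  "baire_space_top = product_topology (\<lambda>_. discrete_topology (UNIV::nat set)) UNIV"

definition sorgenfrey :: "real topology" where
  "sorgenfrey = topology_generated_by {{a..<b} | a b. True}"

end

theory Submission
  imports Defs "HOL-Library.Nat_Bijection"
begin

text \<open>
  For the Baire space the cylinders over finite sequences form the tree, and every neighbourhood
  of p contains the cylinders of p from some height on.

  For a co-countable X in the Sorgenfrey line the leaves are traces on X of half-open intervals:
  the sons of the root are the unit intervals, and a node of height n is cut either into pieces
  accumulating at its right endpoint, or, in order to delete the point of the complement of X
  scheduled for height n, into pieces accumulating from both sides at that point. Widths halve
  at each level, so along a branch the intervals shrink to a point; infinitely many
  right-accumulating levels keep that point inside every half-open interval, and the deletions
  force it into X. At a right-accumulating height, cofinitely many sons of the node containing p
  lie in a given [p, p + e), so the height belongs to the rise; for X = UNIV every height is of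
  this kind, in general every odd one.
\<close>

lemma cofin_refinesI:
  fixes B :: "nat set"
  assumes "infinite B" "\<And>D. D \<in> R \<Longrightarrow> \<exists>N. \<forall>n\<in>B. N \<le> n \<longrightarrow> n \<in> D"
  shows "cofin B \<ggreater> R"
  unfolding refines_def
proof (intro ballI impI)
  fix D assume "D \<in> R"
  then obtain N where N: "\<forall>n\<in>B. N \<le> n \<longrightarrow> n \<in> D" using assms(2) by blast
  have "B - {..<N} = B - (B \<inter> {..<N})" "finite (B \<inter> {..<N})" by auto
  then have "B - {..<N} \<in> cofin B" unfolding cofin_def by blast
  moreover obtain n where "n \<in> B" "N \<le> n" using assms(1) infinite_nat_iff_unbounded_le by blast
  then have "B - {..<N} \<noteq> {}" by auto
  moreover have "B - {..<N} \<subseteq> D" using N by auto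
  ultimately show "\<exists>G\<in>cofin B. G \<noteq> {} \<and> G \<subseteq> D" by (intro bexI conjI)
qed


lemma sons_eq_range: "sons s = range (\<lambda>j. s @ [j])"
  by (auto simp: sons_def)

lemma locally_strictI:
  assumes "\<And>s j. F (s @ [j]) \<subseteq> F s"
    and "\<And>s x. x \<in> F s \<Longrightarrow> \<exists>j. x \<in> F (s @ [j])"
    and "\<And>s i j. i \<noteq> j \<Longrightarrow> F (s @ [i]) \<inter> F (s @ [j]) = {}"
  shows "locally_strict F"
  unfolding locally_strict_def
proof
  fix s
  have "F s = (\<Union>j. F (s @ [j]))"
    using assms(1)[where s=s] assms(2)[where s=s] by blast
  moreover have "disjoint_family_on F (sons s)"
    unfolding disjoint_family_on_def sons_eq_range
  proof (intro ballI impI)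
    fix m n assume "m \<in> range (\<lambda>j. s @ [j])" "n \<in> range (\<lambda>j. s @ [j])" "m \<noteq> n"
    then obtain i j where "m = s @ [i]" "n = s @ [j]" "i \<noteq> j" by auto
    then show "F m \<inter> F n = {}" using assms(3) by simp
  qed
  ultimately show "F s = (\<Union>t\<in>sons s. F t) \<and> disjoint_family_on F (sons s)"
    by (simp add: sons_eq_range)
qed

lemma locally_strict_exists_node:
  assumes "locally_strict F" "p \<in> F []"
  shows "\<exists>v. length v = n \<and> p \<in> F v"
proof (induction n)
  case 0
  then show ?case using assms(2) by (intro exI[of _ "[]"]) simp
next
  case (Suc n)
  then obtain v where v: "length v = n" "p \<in> F v" by blast
  moreover have "F v = (\<Union>s\<in>sons v. F s)" using assms(1) unfolding locally_strict_def by blast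
  ultimately obtain j where "p \<in> F (v @ [j])" unfolding sons_eq_range by blast
  then show ?case using v(1) by (intro exI[of _ "v @ [j]"]) simp
qed

lemma shoot_refines_singletonI:
  assumes "F (v @ [J]) \<noteq> {}" "\<And>j. J \<le> j \<Longrightarrow> F (v @ [j]) \<subseteq> U"
  shows "shoot F v \<ggreater> {U}"
proof -
  define C where "C = sons v - (\<lambda>j. v @ [j]) ` {..<J}"
  have "(\<lambda>j. v @ [j]) ` {..<J} \<subseteq> sons v" by (auto simp: sons_eq_range)
  then have "C \<in> cofin (sons v)" unfolding cofin_def C_def by blast
  then have "(\<Union>x\<in>C. F x) \<in> shoot F v" unfolding shoot_def by blast
  moreover have "C = (\<lambda>j. v @ [j]) ` {J..}" by (auto simp: C_def sons_eq_range image_iff not_less)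
  then have "(\<Union>x\<in>C. F x) = (\<Union>j\<in>{J..}. F (v @ [j]))" by simp
  then have "F (v @ [J]) \<subseteq> (\<Union>x\<in>C. F x)" "(\<Union>x\<in>C. F x) \<subseteq> U" using assms(2) by auto
  ultimately show ?thesis using assms(1) unfolding refines_def by blast
qed

lemma pi_tree_and_cofin_refines_Rise:
  assumes "baire_foliage_tree T F" "infinite B"
    and "\<And>p U. p \<in> topspace T \<Longrightarrow> nbhd T p U \<Longrightarrow>
      \<exists>N. \<forall>n\<in>B. N \<le> n \<longrightarrow> (\<exists>v. length v = n \<and> p \<in> F v \<and> shoot F v \<ggreater> {U})"
  shows "pi_tree T F \<and> cofin B \<ggreater> Rise F T"
proof
  show "pi_tree T F"
    unfolding pi_tree_def grows_into_def scope_def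
  proof (intro conjI assms(1) ballI allI impI)
    fix p U assume "p \<in> topspace T" "nbhd T p U"
    then obtain N where "\<forall>n\<in>B. N \<le> n \<longrightarrow> (\<exists>v. length v = n \<and> p \<in> F v \<and> shoot F v \<ggreater> {U})"
      using assms(3) by blast
    moreover obtain n where "n \<in> B" "N \<le> n" using assms(2) infinite_nat_iff_unbounded_le by blast
    ultimately show "\<exists>z\<in>{x. p \<in> F x}. shoot F z \<ggreater> {U}" by auto
  qed
  show "cofin B \<ggreater> Rise F T"
  proof (rule cofin_refinesI[OF assms(2)])
    fix D assume "D \<in> Rise F T"
    then obtain p U where "D = rise F p U" "p \<in> topspace T" "nbhd T p U" unfolding Rise_def by blast
    then show "\<exists>N. \<forall>n\<in>B. N \<le> n \<longrightarrow> n \<in> D"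
      using assms(3) unfolding rise_def scope_def by fastforce
  qed
qed

definition cylinder :: "nat list \<Rightarrow> (nat \<Rightarrow> nat) set" where
  "cylinder s = {g. \<forall>i<length s. g i = s ! i}"

lemma cylinder_map_upt [simp]: "cylinder (map p [0..<k]) = {g. \<forall>i<k. g i = p i}"
  by (auto simp: cylinder_def)

lemma cylinder_snoc: "cylinder (s @ [j]) = {g \<in> cylinder s. g (length s) = j}"
  by (auto simp: cylinder_def nth_append less_Suc_eq)

lemma cylinder_nonempty: "cylinder s \<noteq> {}"
proof -
  have "(\<lambda>i. if i < length s then s ! i else 0) \<in> cylinder s" by (simp add: cylinder_def)
  then show ?thesis by blast
qed

lemma topspace_baire_space [simp]: "topspace baire_space_top = UNIV"
  by (simp add: baire_space_top_def)

lemma openin_cylinder: "openin baire_space_top (cylinder s)"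
  unfolding baire_space_top_def openin_product_topology_alt
proof
  fix x assume x: "x \<in> cylinder s"
  define W where "W i = (if i < length s then {s ! i} else UNIV)" for i
  have "finite {i \<in> UNIV. W i \<noteq> topspace (discrete_topology UNIV)}"
    by (rule finite_subset[of _ "{..<length s}"]) (auto simp: W_def)
  moreover have "x \<in> Pi\<^sub>E UNIV W" "Pi\<^sub>E UNIV W \<subseteq> cylinder s"
    using x by (auto simp: W_def cylinder_def PiE_iff split: if_splits)
  ultimately show "\<exists>W. finite {i \<in> UNIV. W i \<noteq> topspace (discrete_topology UNIV)} \<and>
      (\<forall>i\<in>UNIV. openin (discrete_topology UNIV) (W i)) \<and> x \<in> Pi\<^sub>E UNIV W \<and> Pi\<^sub>E UNIV W \<subseteq> cylinder s"
    by auto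
qed

lemma nbhd_baire_space_contains_cylinder:
  assumes "nbhd baire_space_top p U"
  obtains k where "cylinder (map p [0..<k]) \<subseteq> U"
proof -
  obtain V where V: "openin baire_space_top V" "p \<in> V" "V \<subseteq> U"
    using assms unfolding nbhd_def by blast
  have "\<forall>x\<in>V. \<exists>W. finite {i \<in> UNIV. W i \<noteq> topspace (discrete_topology (UNIV::nat set))} \<and>
      (\<forall>i\<in>UNIV. openin (discrete_topology UNIV) (W i)) \<and> x \<in> Pi\<^sub>E UNIV W \<and> Pi\<^sub>E UNIV W \<subseteq> V"
    using V(1) by (simp only: baire_space_top_def openin_product_topology_alt)
  then obtain W where W: "finite {i \<in> UNIV. W i \<noteq> topspace (discrete_topology (UNIV::nat set))}"
      "p \<in> Pi\<^sub>E UNIV W" "Pi\<^sub>E UNIV W \<subseteq> V"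
    using V(2) by blast
  obtain k where k: "{i \<in> UNIV. W i \<noteq> topspace (discrete_topology (UNIV::nat set))} \<subseteq> {..<k}"
    using finite_nat_bounded[OF W(1)] by blast
  have "cylinder (map p [0..<k]) \<subseteq> Pi\<^sub>E UNIV W"
  proof
    fix g assume g: "g \<in> cylinder (map p [0..<k])"
    have "g i \<in> W i" for i
    proof (cases "i < k")
      case True
      then show ?thesis using g W(2) by (simp add: PiE_iff)
    next
      case False
      then have "i \<notin> {..<k}" by simp
      then have "i \<notin> {i \<in> UNIV. W i \<noteq> topspace (discrete_topology (UNIV::nat set))}" using k by blast
      then show ?thesis by simp
    qed
    then show "g \<in> Pi\<^sub>E UNIV W" by (simp add: PiE_iff)
  qed
  then show thesis using W(3) V(3) by (meson order_trans that)
qed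

lemma baire_foliage_tree_cylinder: "baire_foliage_tree baire_space_top cylinder"
  unfolding baire_foliage_tree_def open_in_space_def strict_branches_def
proof (intro conjI allI)
  show "openin baire_space_top (cylinder s)" for s
    by (rule openin_cylinder)
  show "locally_strict cylinder"
    by (rule locally_strictI) (auto simp: cylinder_snoc)
  show "\<exists>q. (\<Inter>k. cylinder (map f [0..<k])) = {q}" for f :: "nat \<Rightarrow> nat"
  proof
    show "(\<Inter>k. cylinder (map f [0..<k])) = {f}"
      by (auto intro!: ext)
  qed
  show "cylinder [] = topspace baire_space_top"
    by (simp add: cylinder_def)
qed

lemma baire_space_pi_tree:
  "pi_tree baire_space_top cylinder \<and> cofin (UNIV::nat set) \<ggreater> Rise cylinder baire_space_top"
proof (rule pi_tree_and_cofin_refines_Rise[OF baire_foliage_tree_cylinder infinite_UNIV_nat])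
  fix p U assume "nbhd baire_space_top p U"
  then obtain k where k: "cylinder (map p [0..<k]) \<subseteq> U"
    by (rule nbhd_baire_space_contains_cylinder)
  have shoot_U: "shoot cylinder (map p [0..<n]) \<ggreater> {U}" if "k \<le> n" for n
  proof (rule shoot_refines_singletonI[of _ _ 0])
    show "cylinder (map p [0..<n] @ [0]) \<noteq> {}" by (rule cylinder_nonempty)
    show "cylinder (map p [0..<n] @ [j]) \<subseteq> U" for j
      using k that by (auto simp: cylinder_snoc)
  qed
  show "\<exists>N. \<forall>n\<in>UNIV. N \<le> n \<longrightarrow>
      (\<exists>v. length v = n \<and> p \<in> cylinder v \<and> shoot cylinder v \<ggreater> {U})"
  proof (intro exI[of _ k] ballI impI)
    fix n assume "k \<le> n"
    then show "\<exists>v. length v = n \<and> p \<in> cylinder v \<and> shoot cylinder v \<ggreater> {U}"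
      using shoot_U by (intro exI[of _ "map p [0..<n]"]) simp
  qed
qed

abbreviation ivl :: "real \<times> real \<Rightarrow> real set" where
  "ivl c \<equiv> {fst c..<snd c}"

definition right_piece :: "real \<Rightarrow> real \<Rightarrow> nat \<Rightarrow> real \<times> real" where
  "right_piece a b j = (b - (b - a) / 2 ^ j, b - (b - a) / 2 ^ Suc j)"

definition left_piece :: "real \<Rightarrow> real \<Rightarrow> nat \<Rightarrow> real \<times> real" where
  "left_piece a b j = (a + (b - a) / 2 ^ Suc j, a + (b - a) / 2 ^ j)"

lemma halving_antimono:
  assumes "0 \<le> (c::real)" "i \<le> j"
  shows "c / 2 ^ j \<le> c / 2 ^ i"
  using assms by (intro divide_left_mono power_increasing) auto

lemma eventually_halving_less:
  assumes "0 < (e::real)"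
  shows "\<exists>N. \<forall>n\<ge>N. c / 2 ^ n < e"
  using order_tendstoD(2)[OF LIMSEQ_divide_realpow_zero[of 2 c] assms]
  by (simp add: eventually_sequentially)

lemma right_piece_bounds:
  assumes "a < b"
  shows "a \<le> fst (right_piece a b j)" "snd (right_piece a b j) < b"
    "fst (right_piece a b j) < snd (right_piece a b j)"
    "snd (right_piece a b j) - fst (right_piece a b j) = (b - a) / 2 ^ Suc j"
proof -
  define w where "w = (b - a) / 2 ^ j"
  have w: "0 < w" "w \<le> b - a" "(b - a) / 2 ^ Suc j = w / 2"
    using assms halving_antimono[of "b - a" 0 j] by (auto simp: w_def)
  then show "a \<le> fst (right_piece a b j)" "snd (right_piece a b j) < b"
    "fst (right_piece a b j) < snd (right_piece a b j)"
    "snd (right_piece a b j) - fst (right_piece a b j) = (b - a) / 2 ^ Suc j"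
    unfolding right_piece_def prod.sel w(3) w_def[symmetric] by linarith+
qed

lemma left_piece_bounds:
  assumes "a < b"
  shows "a < fst (left_piece a b j)" "snd (left_piece a b j) \<le> b"
    "fst (left_piece a b j) < snd (left_piece a b j)"
    "snd (left_piece a b j) - fst (left_piece a b j) = (b - a) / 2 ^ Suc j"
proof -
  define w where "w = (b - a) / 2 ^ j"
  have w: "0 < w" "w \<le> b - a" "(b - a) / 2 ^ Suc j = w / 2"
    using assms halving_antimono[of "b - a" 0 j] by (auto simp: w_def)
  then show "a < fst (left_piece a b j)" "snd (left_piece a b j) \<le> b"
    "fst (left_piece a b j) < snd (left_piece a b j)"
    "snd (left_piece a b j) - fst (left_piece a b j) = (b - a) / 2 ^ Suc j"
    unfolding left_piece_def prod.sel w(3) w_def[symmetric] by linarith+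
qed

lemma right_pieces_disjoint:
  assumes "a < b" "i \<noteq> j"
  shows "ivl (right_piece a b i) \<inter> ivl (right_piece a b j) = {}"
proof -
  have "snd (right_piece a b i) \<le> fst (right_piece a b j)" if "i < j" for i j
    using that assms halving_antimono[of "b - a" "Suc i" j] by (simp add: right_piece_def)
  then show ?thesis
    using assms(2) by (cases i j rule: linorder_cases) fastforce+
qed

lemma left_pieces_disjoint:
  assumes "a < b" "i \<noteq> j"
  shows "ivl (left_piece a b i) \<inter> ivl (left_piece a b j) = {}"
proof -
  have "snd (left_piece a b j) \<le> fst (left_piece a b i)" if "i < j" for i j
    using that assms halving_antimono[of "b - a" "Suc i" j] by (simp add: left_piece_def)
  then show ?thesis
    using assms(2) by (cases i j rule: linorder_cases) fastforce+
qed

lemma right_pieces_cover: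
  assumes "a \<le> x" "x < b"
  shows "\<exists>j. x \<in> ivl (right_piece a b j)"
proof -
  obtain n where "(b - a) / 2 ^ n < b - x"
    using eventually_halving_less[of "b - x" "b - a"] assms by auto
  then have "x < b - (b - a) / 2 ^ n" by simp
  moreover have "\<not> x < b - (b - a) / 2 ^ 0" using assms by simp
  ultimately obtain k where "\<not> x < b - (b - a) / 2 ^ k" "x < b - (b - a) / 2 ^ Suc k"
    using ex_least_nat_less[of "\<lambda>j. x < b - (b - a) / 2 ^ j" n] by blast
  then show ?thesis unfolding right_piece_def by (intro exI[of _ k]) (simp del: power_Suc)
qed

lemma left_pieces_cover:
  assumes "a < x" "x < b"
  shows "\<exists>j. x \<in> ivl (left_piece a b j)"
proof -
  obtain n where "(b - a) / 2 ^ n < x - a"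
    using eventually_halving_less[of "x - a" "b - a"] assms by auto
  then have "a + (b - a) / 2 ^ n \<le> x" by simp
  moreover have "\<not> a + (b - a) / 2 ^ 0 \<le> x" using assms by simp
  ultimately obtain k where "\<not> a + (b - a) / 2 ^ k \<le> x" "a + (b - a) / 2 ^ Suc k \<le> x"
    using ex_least_nat_less[of "\<lambda>j. a + (b - a) / 2 ^ j \<le> x" n] by blast
  then show ?thesis unfolding left_piece_def by (intro exI[of _ k]) (simp del: power_Suc)
qed

lemma right_pieces_eventually_right_of:
  assumes "a < b" "p < b"
  shows "\<exists>J. \<forall>j\<ge>J. p \<le> fst (right_piece a b j)"
  using eventually_halving_less[of "b - p" "b - a"] assms
  by (force simp: right_piece_def)

definition avoiding_piece :: "real \<Rightarrow> real \<Rightarrow> real \<Rightarrow> nat \<Rightarrow> real \<times> real" where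
  "avoiding_piece d a b j =
    (if a < d \<and> d < b then
       (if even j then right_piece a d (j div 2) else left_piece d b (j div 2))
     else if d = a then left_piece a b j else right_piece a b j)"

text \<open>\<open>piece None\<close> cuts an interval into pieces accumulating at its right end;
  \<open>piece (Some d)\<close> cuts it into pieces covering everything but \<open>d\<close>.\<close>

definition piece :: "real option \<Rightarrow> real \<times> real \<Rightarrow> nat \<Rightarrow> real \<times> real" where
  "piece m c = (case m of
     None \<Rightarrow> right_piece (fst c) (snd c)
   | Some d \<Rightarrow> avoiding_piece d (fst c) (snd c))"

lemma piece_None [simp]: "piece None c = right_piece (fst c) (snd c)"
  and piece_Some [simp]: "piece (Some d) c = avoiding_piece d (fst c) (snd c)"
  by (simp_all add: piece_def)

definition half_subinterval :: "real \<times> real \<Rightarrow> real \<times> real \<Rightarrow> bool" where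
  "half_subinterval c' c \<longleftrightarrow> fst c \<le> fst c' \<and> snd c' \<le> snd c \<and> fst c' < snd c'
     \<and> snd c' - fst c' \<le> (snd c - fst c) / 2"

lemma half_subinterval_widen:
  "half_subinterval c' c \<Longrightarrow> fst c'' \<le> fst c \<Longrightarrow> snd c \<le> snd c'' \<Longrightarrow> half_subinterval c' c''"
  by (auto simp: half_subinterval_def)

lemma half_width_le: "(b - a) / 2 ^ Suc j \<le> (b - a) / (2::real)" if "a < b"
proof -
  have "(b - a) / 2 ^ j / 2 \<le> (b - a) / 2"
    using that halving_antimono[of "b - a" 0 j] by (intro divide_right_mono) auto
  then show ?thesis by simp
qed

lemma right_piece_half_subinterval: "a < b \<Longrightarrow> half_subinterval (right_piece a b j) (a, b)"
  using right_piece_bounds[of a b j] half_width_le[of a b j] unfolding half_subinterval_def by simp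

lemma left_piece_half_subinterval: "a < b \<Longrightarrow> half_subinterval (left_piece a b j) (a, b)"
  using left_piece_bounds[of a b j] half_width_le[of a b j] unfolding half_subinterval_def by simp

lemma avoiding_piece_half_subinterval:
  assumes "a < b"
  shows "half_subinterval (avoiding_piece d a b j) (a, b)"
proof (cases "a < d \<and> d < b")
  case True
  have "half_subinterval (right_piece a d i) (a, b)" "half_subinterval (left_piece d b i) (a, b)" for i
    using True half_subinterval_widen[OF right_piece_half_subinterval, where c''="(a, b)"]
      half_subinterval_widen[OF left_piece_half_subinterval, where c''="(a, b)"]
    by simp_all
  then show ?thesis using True by (simp add: avoiding_piece_def)
next
  case False
  then have "avoiding_piece d a b j = (if d = a then left_piece a b j else right_piece a b j)"
    unfolding avoiding_piece_def by auto
  then show ?thesis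
    using assms right_piece_half_subinterval left_piece_half_subinterval by simp
qed

lemma piece_half_subinterval: "fst c < snd c \<Longrightarrow> half_subinterval (piece m c j) c"
  using right_piece_half_subinterval[of "fst c" "snd c"] avoiding_piece_half_subinterval[of "fst c" "snd c"]
  by (cases m) simp_all

lemma avoiding_pieces_disjoint:
  assumes "a < b" "i \<noteq> j"
  shows "ivl (avoiding_piece d a b i) \<inter> ivl (avoiding_piece d a b j) = {}"
proof (cases "a < d \<and> d < b")
  case True
  then have piece_eq: "avoiding_piece d a b k =
      (if even k then right_piece a d (k div 2) else left_piece d b (k div 2))" for k
    by (simp add: avoiding_piece_def)
  have side: "x < d \<longleftrightarrow> even k" if "x \<in> ivl (avoiding_piece d a b k)" for x k
    using that True right_piece_bounds[of a d "k div 2"] left_piece_bounds[of d b "k div 2"]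
    unfolding piece_eq by (auto split: if_splits)
  show ?thesis
  proof (cases "even i = even j")
    case True
    then have "i div 2 \<noteq> j div 2"
      using assms(2) by (metis dvd_mult_div_cancel odd_two_times_div_two_succ)
    then show ?thesis
      using True \<open>a < d \<and> d < b\<close> right_pieces_disjoint left_pieces_disjoint unfolding piece_eq by auto
  next
    case False
    then show ?thesis using side by blast
  qed
next
  case False
  then show ?thesis
    using right_pieces_disjoint[OF assms] left_pieces_disjoint[OF assms] by (auto simp: avoiding_piece_def)
qed

lemma avoiding_pieces_cover:
  assumes "a \<le> x" "x < b" "x \<noteq> d"
  shows "\<exists>j. x \<in> ivl (avoiding_piece d a b j)"
proof (cases "a < d \<and> d < b")
  case True
  show ?thesis
  proof (cases "x < d")
    case True
    then obtain i where "x \<in> ivl (right_piece a d i)" using right_pieces_cover assms by blast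
    then show ?thesis using \<open>a < d \<and> d < b\<close> by (intro exI[of _ "2 * i"]) (simp add: avoiding_piece_def)
  next
    case False
    then obtain i where "x \<in> ivl (left_piece d b i)" using left_pieces_cover assms by fastforce
    then show ?thesis using \<open>a < d \<and> d < b\<close> by (intro exI[of _ "2 * i + 1"]) (simp add: avoiding_piece_def)
  qed
next
  case False
  then show ?thesis
    using right_pieces_cover[of a x b] left_pieces_cover[of a x b] assms
    by (cases "d = a") (auto simp: avoiding_piece_def)
qed

lemma avoiding_piece_avoids:
  assumes "a < b"
  shows "d \<notin> ivl (avoiding_piece d a b j)"
proof (cases "a < d \<and> d < b")
  case True
  then show ?thesis
    using right_piece_bounds[of a d "j div 2"] left_piece_bounds[of d b "j div 2"]
    by (simp add: avoiding_piece_def)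
next
  case False
  then show ?thesis
    using assms right_piece_bounds[of a b j] left_piece_bounds[of a b j]
    by (cases "d = a") (auto simp: avoiding_piece_def)
qed

lemma pieces_disjoint:
  "fst c < snd c \<Longrightarrow> i \<noteq> j \<Longrightarrow> ivl (piece m c i) \<inter> ivl (piece m c j) = {}"
  using right_pieces_disjoint avoiding_pieces_disjoint by (cases m) auto

lemma pieces_cover: "x \<in> ivl c \<Longrightarrow> m \<noteq> Some x \<Longrightarrow> \<exists>j. x \<in> ivl (piece m c j)"
  using right_pieces_cover avoiding_pieces_cover by (cases m) auto

lemma topspace_sorgenfrey [simp]: "topspace sorgenfrey = UNIV"
proof -
  have "x \<in> {x..<x + 1}" for x :: real by simp
  then show ?thesis unfolding sorgenfrey_def topology_generated_by_topspace by blast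
qed

lemma openin_sorgenfrey_interval: "openin sorgenfrey {a..<b}"
  unfolding sorgenfrey_def by (rule topology_generated_by_Basis) blast

lemma openin_sorgenfrey_imp_interval:
  assumes "openin sorgenfrey W"
  shows "\<forall>x\<in>W. \<exists>e>0. {x..<x + e} \<subseteq> W"
proof -
  have "generate_topology_on {{a..<b} | a b. True} W"
    using assms unfolding sorgenfrey_def by (simp add: openin_topology_generated_by_iff)
  then show ?thesis
  proof (induction rule: generate_topology_on.induct)
    case (Int a b)
    show ?case
    proof
      fix x assume "x \<in> a \<inter> b"
      then obtain e1 e2 where "e1 > 0" "{x..<x + e1} \<subseteq> a" "e2 > 0" "{x..<x + e2} \<subseteq> b"
        using Int.IH by blast
      moreover have "{x..<x + min e1 e2} \<subseteq> {x..<x + e1} \<inter> {x..<x + e2}" by auto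
      ultimately have "{x..<x + min e1 e2} \<subseteq> a \<inter> b" by blast
      then show "\<exists>e>0. {x..<x + e} \<subseteq> a \<inter> b"
        using \<open>e1 > 0\<close> \<open>e2 > 0\<close> by (intro exI[of _ "min e1 e2"]) simp
    qed
  next
    case (UN K)
    then show ?case by blast
  next
    case (Basis s)
    then obtain a b where "s = {a..<b}" by blast
    then show ?case by (auto intro!: exI[of _ "b - _"])
  qed simp
qed

lemma nbhd_sorgenfrey_subspace:
  assumes "nbhd (subtopology sorgenfrey X) p U"
  shows "\<exists>e>0. X \<inter> {p..<p + e} \<subseteq> U"
proof -
  obtain V where V: "openin (subtopology sorgenfrey X) V" "p \<in> V" "V \<subseteq> U"
    using assms unfolding nbhd_def by blast
  then obtain W where W: "openin sorgenfrey W" "V = W \<inter> X" by (auto simp: openin_subtopology)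
  then obtain e where "e > 0" "{p..<p + e} \<subseteq> W"
    using V(2) openin_sorgenfrey_imp_interval by blast
  then show ?thesis using V W by blast
qed

definition root_interval :: "nat \<Rightarrow> real \<times> real" where
  "root_interval j = (of_int (int_decode j), of_int (int_decode j) + 1)"

lemma root_intervals_cover: "x \<in> ivl (root_interval (int_encode \<lfloor>x\<rfloor>))"
  by (simp add: root_interval_def)

lemma root_intervals_disjoint:
  assumes "i \<noteq> j"
  shows "ivl (root_interval i) \<inter> ivl (root_interval j) = {}"
proof -
  have "\<lfloor>x\<rfloor> = int_decode k" if "x \<in> ivl (root_interval k)" for x k
    using that by (simp add: root_interval_def floor_eq_iff)
  moreover have "int_decode i \<noteq> int_decode j"
    using assms by (metis int_decode_inverse)
  ultimately show ?thesis by (metis disjoint_iff)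
qed

fun descend :: "(nat \<Rightarrow> real option) \<Rightarrow> nat \<Rightarrow> real \<times> real \<Rightarrow> nat list \<Rightarrow> real \<times> real" where
  "descend lev n c [] = c"
| "descend lev n c (j # s) = descend lev (Suc n) (piece (lev n) c j) s"

definition node_interval :: "(nat \<Rightarrow> real option) \<Rightarrow> nat list \<Rightarrow> real \<times> real" where
  "node_interval lev s = descend lev 1 (root_interval (hd s)) (tl s)"

lemma descend_snoc: "descend lev n c (s @ [j]) = piece (lev (n + length s)) (descend lev n c s) j"
  by (induction s arbitrary: n c) simp_all

lemma node_interval_singleton [simp]: "node_interval lev [j] = root_interval j"
  by (simp add: node_interval_def)

lemma node_interval_snoc:
  "s \<noteq> [] \<Longrightarrow> node_interval lev (s @ [j]) = piece (lev (length s)) (node_interval lev s) j"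
  by (cases s) (simp_all add: node_interval_def descend_snoc)

lemma node_interval_width:
  assumes "s \<noteq> []"
  shows "fst (node_interval lev s) < snd (node_interval lev s)"
    "snd (node_interval lev s) - fst (node_interval lev s) \<le> (1/2) ^ (length s - 1)"
proof -
  have "fst (node_interval lev s) < snd (node_interval lev s) \<and>
      snd (node_interval lev s) - fst (node_interval lev s) \<le> (1/2) ^ (length s - 1)"
    using assms
  proof (induction s rule: rev_induct)
    case (snoc j s)
    show ?case
    proof (cases "s = []")
      case True
      then show ?thesis by (simp add: root_interval_def)
    next
      case False
      have "(1/2::real) ^ (length s - 1) / 2 = (1/2) ^ length s"
        using False by (cases s) simp_all
      then show ?thesis
        using snoc.IH False piece_half_subinterval[of "node_interval lev s" "lev (length s)" j]
        by (auto simp: node_interval_snoc half_subinterval_def)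
    qed
  qed simp
  then show "fst (node_interval lev s) < snd (node_interval lev s)"
    "snd (node_interval lev s) - fst (node_interval lev s) \<le> (1/2) ^ (length s - 1)"
    by auto
qed

definition leaf :: "real set \<Rightarrow> (nat \<Rightarrow> real option) \<Rightarrow> nat list \<Rightarrow> real set" where
  "leaf X lev s = (if s = [] then X else X \<inter> ivl (node_interval lev s))"

lemma leaf_snoc:
  "leaf X lev (s @ [j]) = X \<inter> ivl (if s = [] then root_interval j else piece (lev (length s)) (node_interval lev s) j)"
  by (simp add: leaf_def node_interval_snoc)

lemma locally_strict_leaf:
  assumes "\<And>n. lev n \<notin> Some ` X"
  shows "locally_strict (leaf X lev)"
proof (rule locally_strictI)
  fix s j
  show "leaf X lev (s @ [j]) \<subseteq> leaf X lev s"
  proof (cases "s = []")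
    case False
    then have "half_subinterval (node_interval lev (s @ [j])) (node_interval lev s)"
      by (simp add: node_interval_snoc node_interval_width(1) piece_half_subinterval)
    then show ?thesis using False by (auto simp: leaf_def half_subinterval_def)
  qed (simp add: leaf_def)
next
  fix s x assume x: "x \<in> leaf X lev s"
  show "\<exists>j. x \<in> leaf X lev (s @ [j])"
  proof (cases "s = []")
    case True
    then show ?thesis using x root_intervals_cover by (auto simp: leaf_snoc leaf_def)
  next
    case False
    have "lev (length s) \<noteq> Some x" using x False assms[of "length s"] by (auto simp: leaf_def)
    moreover have "x \<in> X" "x \<in> ivl (node_interval lev s)" using x False by (auto simp: leaf_def)
    ultimately obtain j where "x \<in> ivl (piece (lev (length s)) (node_interval lev s) j)"
      using pieces_cover by blast
    then show ?thesis using \<open>x \<in> X\<close> False by (intro exI[of _ j]) (simp add: leaf_snoc)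
  qed
next
  fix s :: "nat list" and i j :: nat assume "i \<noteq> j"
  define son where "son k = (if s = [] then root_interval k else piece (lev (length s)) (node_interval lev s) k)"
    for k
  have "ivl (son i) \<inter> ivl (son j) = {}"
    using \<open>i \<noteq> j\<close> root_intervals_disjoint pieces_disjoint node_interval_width(1)
    by (simp add: son_def)
  moreover have "leaf X lev (s @ [k]) \<subseteq> ivl (son k)" for k
    by (simp add: leaf_snoc son_def)
  ultimately show "leaf X lev (s @ [i]) \<inter> leaf X lev (s @ [j]) = {}"
    by blast
qed

lemma leaf_nonempty:
  assumes "countable (UNIV - X)" "s \<noteq> []"
  shows "leaf X lev s \<noteq> {}"
proof
  assume "leaf X lev s = {}"
  then have "{fst (node_interval lev s)<..<snd (node_interval lev s)} \<subseteq> UNIV - X"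
    using assms(2) by (auto simp: leaf_def)
  then have "countable {fst (node_interval lev s)<..<snd (node_interval lev s)}"
    using assms(1) countable_subset by blast
  then show False
    using node_interval_width(1)[OF assms(2), of lev] uncountable_open_interval by blast
qed

text \<open>The last hypothesis is needed because the intervals are half-open at the right.\<close>

lemma nested_intervals_singleton:
  fixes A B :: "nat \<Rightarrow> real"
  assumes "incseq A" "decseq B" "\<And>k. A k < B k" "(\<lambda>k. B k - A k) \<longlonglongrightarrow> 0"
    and "\<And>k. \<exists>m\<ge>k. B (Suc m) < B m"
  shows "\<exists>c. (\<Inter>k. {A k..<B k}) = {c}"
proof -
  have "(\<lambda>k. A k - B k) \<longlonglongrightarrow> 0"
    using tendsto_minus[OF assms(4)] by simp
  then obtain c where c: "\<And>k. A k \<le> c" "A \<longlonglongrightarrow> c" "\<And>k. c \<le> B k" "B \<longlonglongrightarrow> c"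
    using nested_sequence_unique[of A B] assms(1-3) incseq_SucD decseq_SucD less_imp_le by blast
  have "c < B k" for k
  proof -
    obtain m where "k \<le> m" "B (Suc m) < B m" using assms(5) by blast
    then show ?thesis using c(3)[of "Suc m"] decseqD[OF assms(2), of k m] by linarith
  qed
  then have "c \<in> (\<Inter>k. {A k..<B k})" using c(1) by simp
  moreover have "x = c" if "x \<in> (\<Inter>k. {A k..<B k})" for x
  proof -
    have "c \<le> x" using LIMSEQ_le_const2[OF c(2), of x] that by auto
    moreover have "x \<le> c" using LIMSEQ_le_const[OF c(4), of x] that by (auto intro: less_imp_le)
    ultimately show ?thesis by simp
  qed
  ultimately show ?thesis by blast
qed

definition removal_schedule :: "real set \<Rightarrow> (nat \<Rightarrow> real option) \<Rightarrow> bool" where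
  "removal_schedule X lev \<longleftrightarrow> (\<forall>n. lev n \<notin> Some ` X) \<and> (\<forall>y. y \<notin> X \<longrightarrow> (\<exists>n>0. lev n = Some y))"

lemma node_interval_branch_Suc:
  "node_interval lev (map f [0..<Suc (Suc k)]) =
    piece (lev (Suc k)) (node_interval lev (map f [0..<Suc k])) (f (Suc k))"
proof -
  have "map f [0..<Suc (Suc k)] = map f [0..<Suc k] @ [f (Suc k)]" "map f [0..<Suc k] \<noteq> []"
    "length (map f [0..<Suc k]) = Suc k"
    by simp_all
  then show ?thesis by (metis node_interval_snoc)
qed

lemma branch_intervals_singleton:
  assumes "infinite {n. lev n = None}"
  shows "\<exists>c. (\<Inter>k. ivl (node_interval lev (map f [0..<Suc k]))) = {c}"
proof -
  define A where "A k = fst (node_interval lev (map f [0..<Suc k]))" for k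
  define B where "B k = snd (node_interval lev (map f [0..<Suc k]))" for k
  have child: "(A (Suc k), B (Suc k)) = piece (lev (Suc k)) (A k, B k) (f (Suc k))" for k
    unfolding A_def B_def node_interval_branch_Suc by simp
  have AB: "A k < B k" "B k - A k \<le> (1/2) ^ k" for k
    using node_interval_width[of "map f [0..<Suc k]" lev] by (simp_all add: A_def B_def del: upt_Suc)
  have "half_subinterval (A (Suc k), B (Suc k)) (A k, B k)" for k
    unfolding child using piece_half_subinterval[of "(A k, B k)"] AB(1)[of k] by simp
  then have "incseq A" "decseq B"
    by (auto intro!: incseq_SucI decseq_SucI simp: half_subinterval_def)
  moreover have "(\<lambda>k. B k - A k) \<longlonglongrightarrow> 0"
  proof (rule Lim_null_comparison)
    show "\<forall>\<^sub>F k in sequentially. norm (B k - A k) \<le> (1/2) ^ k"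
    proof (intro always_eventually allI)
      show "norm (B k - A k) \<le> (1/2) ^ k" for k using AB[of k] by simp
    qed
    show "(\<lambda>k. (1/2::real) ^ k) \<longlonglongrightarrow> 0"
      by (rule LIMSEQ_power_zero) simp
  qed
  moreover have "\<exists>m\<ge>k. B (Suc m) < B m" for k
  proof -
    obtain n where "Suc k \<le> n" "lev n = None"
      using infinite_nat_iff_unbounded_le[THEN iffD1, OF assms, rule_format, of "Suc k"] by auto
    then obtain m where "k \<le> m" "lev (Suc m) = None" by (cases n) auto
    then have "B (Suc m) < B m"
      using right_piece_bounds(2)[OF AB(1)[of m]] arg_cong[OF child[of m], of snd] by simp
    then show ?thesis using \<open>k \<le> m\<close> by blast
  qed
  ultimately have "\<exists>c. (\<Inter>k. {A k..<B k}) = {c}"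
    using AB(1) by (intro nested_intervals_singleton)
  then show ?thesis by (simp add: A_def B_def)
qed

lemma strict_branches_leaf:
  assumes "removal_schedule X lev" "infinite {n. lev n = None}"
  shows "strict_branches (leaf X lev)"
  unfolding strict_branches_def
proof
  fix f :: "nat \<Rightarrow> nat"
  let ?I = "\<lambda>k. ivl (node_interval lev (map f [0..<Suc k]))"
  obtain c where c: "(\<Inter>k. ?I k) = {c}"
    using branch_intervals_singleton[OF assms(2)] by blast
  have "c \<in> X"
  proof (rule ccontr)
    assume "c \<notin> X"
    then obtain m where "lev (Suc m) = Some c"
      using assms(1) unfolding removal_schedule_def by (metis gr0_implies_Suc)
    then have "c \<notin> ?I (Suc m)"
      using avoiding_piece_avoids node_interval_width(1)[of "map f [0..<Suc m]" lev]
      by (simp add: node_interval_branch_Suc del: upt_Suc)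
    then show False using c by blast
  qed
  have "(\<Inter>k. leaf X lev (map f [0..<k])) =
      leaf X lev (map f [0..<0]) \<inter> (\<Inter>m. leaf X lev (map f [0..<Suc m]))"
    by (subst UNIV_nat_eq) (simp add: image_comp)
  also have "\<dots> = X \<inter> (\<Inter>k. ?I k)"
    by (auto simp: leaf_def simp del: upt_Suc)
  finally show "\<exists>q. (\<Inter>k. leaf X lev (map f [0..<k])) = {q}"
    using c \<open>c \<in> X\<close> by auto
qed

lemma leaf_shoot_refines_at_free_level:
  assumes "countable (UNIV - X)" "removal_schedule X lev"
    and "nbhd (subtopology sorgenfrey X) p U" "p \<in> X"
  shows "\<exists>N. \<forall>n\<ge>N. lev n = None \<longrightarrow> (\<exists>v. length v = n \<and> p \<in> leaf X lev v \<and> shoot (leaf X lev) v \<ggreater> {U})"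
proof -
  obtain e where e: "e > 0" "X \<inter> {p..<p + e} \<subseteq> U"
    using nbhd_sorgenfrey_subspace[OF assms(3)] by blast
  obtain K where K: "\<forall>n\<ge>K. 1 / 2 ^ n < e"
    using eventually_halving_less[OF e(1), of 1] by blast
  have "\<exists>v. length v = n \<and> p \<in> leaf X lev v \<and> shoot (leaf X lev) v \<ggreater> {U}"
    if n: "Suc K \<le> n" "lev n = None" for n
  proof -
    have ls: "locally_strict (leaf X lev)"
      using assms(2) locally_strict_leaf unfolding removal_schedule_def by blast
    obtain v where v: "length v = n" "p \<in> leaf X lev v"
      using locally_strict_exists_node[OF ls, of p n] assms(4) by (auto simp: leaf_def)
    define a b where "a = fst (node_interval lev v)" and "b = snd (node_interval lev v)"
    have "v \<noteq> []" using v(1) n(1) by auto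
    then have ab: "a < b" "b - a \<le> (1/2) ^ (n - 1)" "a \<le> p" "p < b"
      using node_interval_width[of v lev] v by (auto simp: a_def b_def leaf_def)
    have "(1/2::real) ^ (n - 1) < e"
      using K n(1) by (simp add: power_one_over)
    then have "b \<le> p + e" using ab by linarith
    obtain J where J: "\<forall>j\<ge>J. p \<le> fst (right_piece a b j)"
      using right_pieces_eventually_right_of[OF ab(1) ab(4)] by blast
    have sons: "leaf X lev (v @ [j]) = X \<inter> ivl (right_piece a b j)" for j
      using \<open>v \<noteq> []\<close> n(2) v(1) by (simp add: leaf_snoc a_def b_def)
    have "shoot (leaf X lev) v \<ggreater> {U}"
    proof (rule shoot_refines_singletonI)
      show "leaf X lev (v @ [J]) \<noteq> {}" by (rule leaf_nonempty[OF assms(1)]) simp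
      show "leaf X lev (v @ [j]) \<subseteq> U" if "J \<le> j" for j
        using that J right_piece_bounds(2)[OF ab(1), of j] \<open>b \<le> p + e\<close> e(2) unfolding sons by force
    qed
    then show ?thesis using v by blast
  qed
  then show ?thesis by blast
qed

lemma sorgenfrey_subspace_pi_tree:
  assumes "countable (UNIV - X)" "removal_schedule X lev" "infinite B" "B \<subseteq> {n. lev n = None}"
  shows "pi_tree (subtopology sorgenfrey X) (leaf X lev)
    \<and> cofin B \<ggreater> Rise (leaf X lev) (subtopology sorgenfrey X)"
proof (rule pi_tree_and_cofin_refines_Rise[OF _ assms(3)])
  have "openin (subtopology sorgenfrey X) (leaf X lev s)" for s
    using openin_sorgenfrey_interval openin_topspace[of "subtopology sorgenfrey X"]
    by (auto simp: leaf_def openin_subtopology_Int2)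
  moreover have "locally_strict (leaf X lev)"
    using assms(2) locally_strict_leaf unfolding removal_schedule_def by blast
  moreover have "strict_branches (leaf X lev)"
    using strict_branches_leaf[OF assms(2) infinite_super[OF assms(4,3)]] .
  ultimately show "baire_foliage_tree (subtopology sorgenfrey X) (leaf X lev)"
    by (simp add: baire_foliage_tree_def open_in_space_def leaf_def)
next
  fix p U assume p: "p \<in> topspace (subtopology sorgenfrey X)" and U: "nbhd (subtopology sorgenfrey X) p U"
  obtain N where "\<forall>n\<ge>N. lev n = None \<longrightarrow>
      (\<exists>v. length v = n \<and> p \<in> leaf X lev v \<and> shoot (leaf X lev) v \<ggreater> {U})"
    using leaf_shoot_refines_at_free_level[OF assms(1,2) U] p by auto
  then show "\<exists>N. \<forall>n\<in>B. N \<le> n \<longrightarrow>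
      (\<exists>v. length v = n \<and> p \<in> leaf X lev v \<and> shoot (leaf X lev) v \<ggreater> {U})"
    using assms(4) by blast
qed

lemma exists_removal_schedule:
  assumes "countable (UNIV - X)"
  obtains lev where "removal_schedule X lev" "\<And>n. odd n \<Longrightarrow> lev n = None"
proof (cases "X = UNIV")
  case True
  then show thesis by (intro that[of "\<lambda>_. None"]) (auto simp: removal_schedule_def)
next
  case False
  \<comment> \<open>level 0 is never consulted: the sons of the root are the unit intervals\<close>
  define lev where "lev n = (if odd n then None else Some (from_nat_into (UNIV - X) (n div 2 - 1)))" for n
  have "removal_schedule X lev"
    unfolding removal_schedule_def
  proof (intro conjI allI impI)
    show "lev n \<notin> Some ` X" for n
      using False from_nat_into[of "UNIV - X"] by (auto simp: lev_def)
    fix y assume "y \<notin> X"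
    then obtain k where "from_nat_into (UNIV - X) k = y" using from_nat_into_surj[OF assms] by blast
    then have "lev (2 * k + 2) = Some y" by (simp add: lev_def)
    then show "\<exists>n>0. lev n = Some y" by (intro exI[of _ "2 * k + 2"]) simp
  qed
  then show thesis by (rule that) (simp add: lev_def)
qed

lemma infinite_odd_nat: "infinite {2*n+1 | n::nat. True}"
proof -
  have "inj (\<lambda>n::nat. 2*n+1)" by (simp add: inj_on_def)
  moreover have "{2*n+1 | n::nat. True} = range (\<lambda>n. 2*n+1)" by auto
  ultimately show ?thesis using range_inj_infinite by metis
qed

theorem lemma19:
  shows "(\<exists>F. pi_tree baire_space_top F \<and> cofin (UNIV::nat set) \<ggreater> Rise F baire_space_top)
    \<and> (\<exists>G. pi_tree sorgenfrey G \<and> cofin (UNIV::nat set) \<ggreater> Rise G sorgenfrey)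
    \<and> (\<forall>X::real set. countable (UNIV - X) \<longrightarrow>
        (\<exists>H. pi_tree (subtopology sorgenfrey X) H \<and>
             cofin {2*n+1 | n::nat. True} \<ggreater> Rise H (subtopology sorgenfrey X)))"
proof (intro conjI allI impI)
  show "\<exists>F. pi_tree baire_space_top F \<and> cofin (UNIV::nat set) \<ggreater> Rise F baire_space_top"
    using baire_space_pi_tree by blast
  have "removal_schedule UNIV (\<lambda>_. None)" by (simp add: removal_schedule_def)
  then show "\<exists>G. pi_tree sorgenfrey G \<and> cofin (UNIV::nat set) \<ggreater> Rise G sorgenfrey"
    using sorgenfrey_subspace_pi_tree[of UNIV "\<lambda>_. None" UNIV] by auto
next
  fix X :: "real set" assume X: "countable (UNIV - X)"
  obtain lev where "removal_schedule X lev" "\<And>n. odd n \<Longrightarrow> lev n = None"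
    using exists_removal_schedule[OF X] by blast
  then show "\<exists>H. pi_tree (subtopology sorgenfrey X) H \<and>
      cofin {2*n+1 | n::nat. True} \<ggreater> Rise H (subtopology sorgenfrey X)"
    using sorgenfrey_subspace_pi_tree[OF X _ infinite_odd_nat, of lev] by fastforce
qed

end
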